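(* Let $(\mathcal{X},\rho,\nu)$ be a metric measure space where $\nu$ is a finite Borel measure. Suppose $\mathbb{X}=(X_n)_{n\ge0}$ is uniformly dominated by $\nu$ at rate $\epsilon(\delta)$. Then for any $\epsilon>0$ there exists a region $\mathcal{X}'\subset\mathcal{X}$ of bounded diameter such that, for any nearest neighbor process $(\tilde X_n)_{n\ge1}$, \[\limsup_{N\to\infty}\frac1N\sum_{n=1}^N\mathbb{1}\{X_n\notin\mathcal{X}'\text{ or }\tilde X_n\notin\mathcal{X}'\}<\epsilon\quad\text{almost surely.}\]
   Context: $\mathbb{X}_{<n}=\{X_0,\dots,X_{n-1}\}$; a nearest neighbor process is any $(\tilde X_n)_{n\ge1}$ with $\tilde X_n\in\arg\min_{x\in\mathbb{X}_{<n}}\rho(X_n,x)$. $\mathbb{X}$ is uniformly dominated by $\nu$ if for every $\epsilon>0$ there is $\delta>0$ such that every measurable $A$ with $\nu(A)<\delta$ satisfies $\sup_n\Pr(X_n\in A\mid\mathbb{X}_{<n})<\epsilon$ a.s.; it is uniformly dominated at rate $\epsilon(\cdot)$ if in addition, for every $\delta>0$ and measurable $A$ with $\nu(A)<\delta$, $\sup_n\Pr(X_n\in A\mid\mathbb{X}_{<n})<\epsilon(\delta)$ a.s. *)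

theory Defs
  imports "HOL-Probability.Probability"
begin

definition past_sigma :: "'b measure \<Rightarrow> (nat \<Rightarrow> 'b \<Rightarrow> 'a::topological_space) \<Rightarrow> nat \<Rightarrow> 'b measure" where
  "past_sigma M X n =
     sigma (space M) (\<Union>i\<in>{..<n}. {X i -` B \<inter> space M | B. B \<in> sets borel})"

definition cond_prob_past :: "'b measure \<Rightarrow> (nat \<Rightarrow> 'b \<Rightarrow> 'a::topological_space) \<Rightarrow> nat \<Rightarrow> 'a set \<Rightarrow> 'b \<Rightarrow> ennreal" where
  "cond_prob_past M X n A = nn_cond_exp M (past_sigma M X n) (\<lambda>\<omega>. indicator A (X n \<omega>))"

definition unif_dominated_rate ::
  "'b measure \<Rightarrow> (nat \<Rightarrow> 'b \<Rightarrow> 'a::topological_space) \<Rightarrow> 'a measure \<Rightarrow> (real \<Rightarrow> real) \<Rightarrow> bool" where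
  "unif_dominated_rate M X \<nu> epsr \<longleftrightarrow>
     (\<forall>e>0. \<exists>\<delta>>0. \<forall>A \<in> sets \<nu>. measure \<nu> A < \<delta> \<longrightarrow>
        (AE \<omega> in M. (SUP n. cond_prob_past M X n A \<omega>) < ennreal e)) \<and>
     (\<forall>\<delta>>0. \<forall>A \<in> sets \<nu>. measure \<nu> A < \<delta> \<longrightarrow>
        (AE \<omega> in M. (SUP n. cond_prob_past M X n A \<omega>) < ennreal (epsr \<delta>)))"

definition nn_process :: "(nat \<Rightarrow> 'b \<Rightarrow> 'a::metric_space) \<Rightarrow> (nat \<Rightarrow> 'b \<Rightarrow> 'a) \<Rightarrow> bool" where
  "nn_process X Xt \<longleftrightarrow>
     (\<forall>n\<ge>1. \<forall>\<omega>. (\<exists>i<n. Xt n \<omega> = X i \<omega>) \<and>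
        (\<forall>i<n. dist (X n \<omega>) (Xt n \<omega>) \<le> dist (X n \<omega>) (X i \<omega>)))"

end

theory Submission
  imports Defs "HOL-Library.Discrete_Functions"
begin

text \<open>Fix a centre \<open>x\<close>. By uniform domination and continuity from above of the finite measure
  \<open>\<nu>\<close>, there is a radius \<open>r\<close> such that, for \<open>A\<close> the complement of \<open>ball x r\<close>, every conditional
  probability \<open>Pr(X\<^sub>n \<in> A | X\<^sub>0, ..., X\<^sub>n\<^sub>-\<^sub>1)\<close> is almost surely below \<open>\<epsilon>/4\<close>. The centred
  indicators \<open>1\<^sub>A(X\<^sub>n) - Pr(X\<^sub>n \<in> A | past)\<close> are bounded and orthogonal, so a strong law of
  large numbers (Chebyshev and Borel-Cantelli along the squares \<open>j\<^sup>2\<close>, then interpolation)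
  shows that the frequency of visits of \<open>X\<^sub>n\<close> to \<open>A\<close> is eventually at most \<open>\<epsilon>/2\<close>.
  Once some \<open>X\<^sub>i\<close> lies in \<open>ball x r\<close>, every later \<open>X\<^sub>n\<close> in \<open>ball x r\<close> has its nearest
  neighbour within \<open>2r\<close> of it, so both lie in \<open>ball x (3r)\<close>. Hence, for all but finitely many
  \<open>n\<close>, leaving \<open>ball x (3r)\<close> forces \<open>X\<^sub>n \<in> A\<close>.\<close>

section \<open>Averages of real sequences\<close>

lemma abs_diff_le_of_unit_steps:
  fixes S :: "nat \<Rightarrow> real"
  assumes step: "\<And>n. \<bar>S (Suc n) - S n\<bar> \<le> 1" and "m \<le> n"
  shows "\<bar>S n - S m\<bar> \<le> real (n - m)"
proof -
  have "\<bar>S n - S m\<bar> = \<bar>\<Sum>i=m..<n. S (Suc i) - S i\<bar>"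
    using sum_Suc_diff'[OF \<open>m \<le> n\<close>, of S] by simp
  also have "\<dots> \<le> (\<Sum>i=m..<n. \<bar>S (Suc i) - S i\<bar>)"
    by (rule sum_abs)
  also have "\<dots> \<le> real (n - m)"
    using sum_bounded_above[of "{m..<n}" "\<lambda>i. \<bar>S (Suc i) - S i\<bar>" 1] step by simp
  finally show ?thesis .
qed

lemma sublinear_of_sublinear_on_squares:
  fixes S :: "nat \<Rightarrow> real"
  assumes step: "\<And>n. \<bar>S (Suc n) - S n\<bar> \<le> 1"
    and squares: "\<And>c. c > 0 \<Longrightarrow> \<forall>\<^sub>F j in sequentially. \<bar>S (j\<^sup>2)\<bar> \<le> c * real (j\<^sup>2)"
    and "\<eta> > 0"
  shows "\<forall>\<^sub>F N in sequentially. \<bar>S N\<bar> \<le> \<eta> * real N"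
proof -
  obtain J where J: "\<And>j. j \<ge> J \<Longrightarrow> \<bar>S (j\<^sup>2)\<bar> \<le> \<eta>/2 * real (j\<^sup>2)"
    using squares[of "\<eta>/2"] \<open>\<eta> > 0\<close> by (auto simp: eventually_sequentially)
  obtain L :: nat where L: "4/\<eta> < real L"
    using reals_Archimedean2 by blast
  have "\<bar>S N\<bar> \<le> \<eta> * real N" if N: "(max J L)\<^sup>2 \<le> N" for N
  proof -
    define j where "j = floor_sqrt N"
    have "max J L \<le> j"
      unfolding j_def using N by (rule le_floor_sqrtI)
    have "j\<^sup>2 \<le> N" "N < (Suc j)\<^sup>2"
      unfolding j_def by (simp, rule Suc_floor_sqrt_power2_gt)
    then have "N - j\<^sup>2 \<le> 2 * j"
      by (simp add: power2_eq_square)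
    then have "\<bar>S N - S (j\<^sup>2)\<bar> \<le> 2 * real j"
      using abs_diff_le_of_unit_steps[of S, OF step \<open>j\<^sup>2 \<le> N\<close>] by linarith
    moreover have "\<bar>S (j\<^sup>2)\<bar> \<le> \<eta>/2 * real (j\<^sup>2)"
      using J \<open>max J L \<le> j\<close> by simp
    moreover have "2 * real j \<le> \<eta>/2 * real (j\<^sup>2)"
    proof -
      have "4 < \<eta> * real L"
        using L \<open>\<eta> > 0\<close> by (simp add: field_simps)
      also have "\<dots> \<le> \<eta> * real j"
        using \<open>max J L \<le> j\<close> \<open>\<eta> > 0\<close> by simp
      finally have "4 \<le> \<eta> * real j"
        by simp
      then show ?thesis
        by (simp add: power2_eq_square) (metis mult.assoc mult_right_mono of_nat_0_le_iff)
    qed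
    moreover have "\<eta>/2 * real (j\<^sup>2) \<le> \<eta>/2 * real N"
      using \<open>j\<^sup>2 \<le> N\<close> \<open>\<eta> > 0\<close> by simp
    ultimately show ?thesis
      by linarith
  qed
  then show ?thesis
    by (auto simp: eventually_sequentially)
qed

lemma abs_sum_le_of_abs_le_1:
  fixes d :: "nat \<Rightarrow> real"
  assumes "\<And>i. \<bar>d i\<bar> \<le> 1"
  shows "\<bar>\<Sum>i<n. d i\<bar> \<le> real n"
  using order_trans[OF sum_abs sum_bounded_above[of "{..<n}" "\<lambda>i. \<bar>d i\<bar>" 1]] assms by simp

lemma limsup_frequency_less:
  fixes P Q :: "nat \<Rightarrow> bool"
  assumes PQ: "\<forall>\<^sub>F n in sequentially. P n \<longrightarrow> Q n"
    and Q: "\<forall>\<^sub>F N in sequentially. (\<Sum>n<N. of_bool (Q n)) \<le> c * real N"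
    and "c < e"
  shows "limsup (\<lambda>N. ereal (1 / real N * (\<Sum>n=1..N. of_bool (P n)))) < ereal e"
proof -
  obtain i0 where i0: "\<And>n. n \<ge> i0 \<Longrightarrow> P n \<longrightarrow> Q n"
    using PQ by (auto simp: eventually_sequentially)
  have count: "(\<Sum>n=1..N. of_bool (P n)) \<le> (\<Sum>n<Suc N. of_bool (Q n)) + real i0" for N
  proof -
    have "(\<Sum>n=1..N. of_bool (P n) :: real) \<le> (\<Sum>n=1..N. of_bool (Q n) + of_bool (n < i0))"
      using i0 by (intro sum_mono) (auto simp: not_less)
    moreover have "(\<Sum>n=1..N. of_bool (n < i0) :: real) \<le> real i0"
      using card_mono[of "{..<i0}" "{1..N} \<inter> {n. n < i0}"] by auto
    moreover have "(\<Sum>n=1..N. of_bool (Q n) :: real) \<le> (\<Sum>n<Suc N. of_bool (Q n))"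
      by (intro sum_mono2) auto
    ultimately show ?thesis
      by (simp add: sum.distrib)
  qed
  have "\<forall>\<^sub>F N in sequentially. (c + real i0) / real N < (e - c) / 2"
    using \<open>c < e\<close> by (intro order_tendstoD(2)[OF lim_const_over_n]) simp
  moreover have "\<forall>\<^sub>F N in sequentially. N > 0"
    by (rule eventually_gt_at_top)
  moreover have "\<forall>\<^sub>F N in sequentially. (\<Sum>n<Suc N. of_bool (Q n)) \<le> c * real (Suc N)"
    using Q unfolding eventually_sequentially by (meson le_SucI)
  ultimately have "\<forall>\<^sub>F N in sequentially. 1 / real N * (\<Sum>n=1..N. of_bool (P n)) \<le> (c + e) / 2"
  proof eventually_elim
    case (elim N)
    have "(\<Sum>n=1..N. of_bool (P n)) \<le> c * real N + (c + real i0)"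
      using count[of N] elim(3) by (simp only: of_nat_Suc distrib_left mult_1_right)
    also have "\<dots> \<le> real N * ((c + e) / 2)"
      using elim(1,2) by (simp add: field_simps)
    finally show ?case
      using elim(2) by (simp add: field_simps)
  qed
  then have "limsup (\<lambda>N. ereal (1 / real N * (\<Sum>n=1..N. of_bool (P n)))) \<le> ereal ((c + e) / 2)"
    by (intro Limsup_bounded) simp
  also have "\<dots> < ereal e"
    using \<open>c < e\<close> by simp
  finally show ?thesis .
qed

section \<open>A strong law for bounded orthogonal increments\<close>

lemma (in finite_measure) integrable_bounded_real:
  fixes f :: "'a \<Rightarrow> real"
  assumes "f \<in> borel_measurable M" and "\<And>\<omega>. \<omega> \<in> space M \<Longrightarrow> \<bar>f \<omega>\<bar> \<le> B"
  shows "integrable M f"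
  using assms by (intro integrable_const_bound[where B=B]) auto

context prob_space
begin

lemma second_moment_sum_orthogonal_le:
  fixes D :: "nat \<Rightarrow> 'a \<Rightarrow> real"
  assumes [measurable]: "\<And>i. D i \<in> borel_measurable M"
    and bounded: "\<And>i \<omega>. \<bar>D i \<omega>\<bar> \<le> 1"
    and orthogonal: "\<And>n. (\<integral>\<omega>. (\<Sum>i<n. D i \<omega>) * D n \<omega> \<partial>M) = 0"
  shows "(\<integral>\<omega>. (\<Sum>i<N. D i \<omega>)\<^sup>2 \<partial>M) \<le> real N"
proof (induction N)
  case (Suc N)
  define S where "S \<omega> = (\<Sum>i<N. D i \<omega>)" for \<omega>
  have [measurable]: "S \<in> borel_measurable M"
    unfolding S_def by measurable
  have S: "\<bar>S \<omega>\<bar> \<le> real N" for \<omega>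
    unfolding S_def using bounded by (intro abs_sum_le_of_abs_le_1)
  have SD: "\<bar>S \<omega> * D N \<omega>\<bar> \<le> real N" for \<omega>
    using mult_mono[OF S bounded] by (simp add: abs_mult)
  have D2: "\<bar>(D N \<omega>)\<^sup>2\<bar> \<le> 1" for \<omega>
    using bounded by (simp add: abs_square_le_1)
  have "\<bar>(S \<omega>)\<^sup>2\<bar> \<le> real N ^ 2" for \<omega>
    using power_mono[OF S abs_ge_zero, where n=2] by simp
  then have "integrable M (\<lambda>\<omega>. (S \<omega>)\<^sup>2)"
    by (intro integrable_bounded_real) simp
  moreover have "integrable M (\<lambda>\<omega>. S \<omega> * D N \<omega>)"
    using SD by (intro integrable_bounded_real) simp
  moreover have int_D2: "integrable M (\<lambda>\<omega>. (D N \<omega>)\<^sup>2)"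
    using D2 by (intro integrable_bounded_real[where B=1]) simp
  ultimately have "(\<integral>\<omega>. (S \<omega> + D N \<omega>)\<^sup>2 \<partial>M)
      = (\<integral>\<omega>. (S \<omega>)\<^sup>2 \<partial>M) + 2 * (\<integral>\<omega>. S \<omega> * D N \<omega> \<partial>M) + (\<integral>\<omega>. (D N \<omega>)\<^sup>2 \<partial>M)"
    unfolding power2_sum by (simp add: mult.assoc)
  moreover have "(\<integral>\<omega>. (D N \<omega>)\<^sup>2 \<partial>M) \<le> (\<integral>\<omega>. 1 \<partial>M)"
    using int_D2 abs_le_D1[OF D2] by (intro integral_mono) simp_all
  ultimately show ?case
    using Suc orthogonal[of N] unfolding S_def by (simp add: prob_space)
qed simp

lemma AE_eventually_abs_sum_squares_le:
  fixes D :: "nat \<Rightarrow> 'a \<Rightarrow> real"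
  assumes [measurable]: "\<And>i. D i \<in> borel_measurable M"
    and bounded: "\<And>i \<omega>. \<bar>D i \<omega>\<bar> \<le> 1"
    and orthogonal: "\<And>n. (\<integral>\<omega>. (\<Sum>i<n. D i \<omega>) * D n \<omega> \<partial>M) = 0"
    and "c > 0"
  shows "AE \<omega> in M. \<forall>\<^sub>F j in sequentially. \<bar>\<Sum>i<j\<^sup>2. D i \<omega>\<bar> \<le> c * real (j\<^sup>2)"
proof -
  define S where "S N \<omega> = (\<Sum>i<N. D i \<omega>)" for N \<omega>
  have S_meas [measurable]: "S N \<in> borel_measurable M" for N
    unfolding S_def by measurable
  have "\<bar>(S N \<omega>)\<^sup>2\<bar> \<le> real N ^ 2" for N \<omega>
    using power_mono[OF abs_sum_le_of_abs_le_1[of "\<lambda>i. D i \<omega>", OF bounded] abs_ge_zero, where n=2]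
    by (simp add: S_def)
  then have S2_int: "integrable M (\<lambda>\<omega>. (S N \<omega>)\<^sup>2)" for N
    by (intro integrable_bounded_real) simp
  define A where "A k = {\<omega> \<in> space M. c * real ((Suc k)\<^sup>2) \<le> \<bar>S ((Suc k)\<^sup>2) \<omega>\<bar>}" for k
  have A_sets [measurable]: "A k \<in> sets M" for k
    unfolding A_def by measurable
  have measure_A: "measure M (A k) \<le> inverse (c\<^sup>2) * inverse (real (Suc k) ^ 2)" for k
  proof -
    have "measure M (A k) \<le> (\<integral>\<omega>. (S ((Suc k)\<^sup>2) \<omega>)\<^sup>2 \<partial>M) / (c * real ((Suc k)\<^sup>2))\<^sup>2"
      unfolding A_def by (rule second_moment_method) (simp_all add: S_meas S2_int \<open>c > 0\<close>)
    also have "\<dots> \<le> real ((Suc k)\<^sup>2) / (c * real ((Suc k)\<^sup>2))\<^sup>2"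
      unfolding S_def using second_moment_sum_orthogonal_le[OF assms(1-3), of "(Suc k)\<^sup>2"]
      by (intro divide_right_mono) auto
    also have "\<dots> = inverse (c\<^sup>2) * inverse (real (Suc k) ^ 2)"
      unfolding of_nat_power using \<open>c > 0\<close> by (simp add: field_simps power2_eq_square del: of_nat_Suc)
    finally show ?thesis .
  qed
  have "summable (\<lambda>k. inverse (c\<^sup>2) * inverse (real (Suc k) ^ 2))"
    using inverse_power_summable[of 2, where 'a=real]
    by (intro summable_mult) (simp add: summable_Suc_iff[where f="\<lambda>n. inverse (real n ^ 2)"] del: of_nat_Suc)
  then have "summable (\<lambda>k. measure M (A k))"
    by (rule summable_comparison_test') (use measure_A in simp)
  then have "AE \<omega> in M. \<forall>\<^sub>F k in sequentially. \<omega> \<in> space M - A k"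
    by (intro borel_cantelli_AE1) (simp_all add: A_sets less_top[symmetric])
  then show ?thesis
  proof eventually_elim
    case (elim \<omega>)
    then have "\<forall>\<^sub>F k in sequentially. \<bar>S ((Suc k)\<^sup>2) \<omega>\<bar> \<le> c * real ((Suc k)\<^sup>2)"
      by (rule eventually_mono) (auto simp: A_def)
    then show ?case
      unfolding S_def
      by (subst eventually_sequentially_Suc[of "\<lambda>j. \<bar>\<Sum>i<j\<^sup>2. D i \<omega>\<bar> \<le> c * real (j\<^sup>2)", symmetric])
  qed
qed

theorem strong_law_bounded_orthogonal:
  fixes D :: "nat \<Rightarrow> 'a \<Rightarrow> real"
  assumes [measurable]: "\<And>i. D i \<in> borel_measurable M"
    and bounded: "\<And>i \<omega>. \<bar>D i \<omega>\<bar> \<le> 1"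
    and orthogonal: "\<And>n. (\<integral>\<omega>. (\<Sum>i<n. D i \<omega>) * D n \<omega> \<partial>M) = 0"
  shows "AE \<omega> in M. \<forall>\<eta>>0. \<forall>\<^sub>F N in sequentially. \<bar>\<Sum>i<N. D i \<omega>\<bar> \<le> \<eta> * real N"
proof -
  have "AE \<omega> in M. \<forall>m. \<forall>\<^sub>F j in sequentially. \<bar>\<Sum>i<j\<^sup>2. D i \<omega>\<bar> \<le> 1 / real (Suc m) * real (j\<^sup>2)"
    unfolding AE_all_countable by (intro allI AE_eventually_abs_sum_squares_le[OF assms]) simp
  then show ?thesis
  proof eventually_elim
    case (elim \<omega>)
    have squares: "\<forall>\<^sub>F j in sequentially. \<bar>\<Sum>i<j\<^sup>2. D i \<omega>\<bar> \<le> c * real (j\<^sup>2)" if "c > 0" for c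
    proof -
      obtain m where "1 / real (Suc m) < c"
        using \<open>c > 0\<close> by (rule nat_approx_posE)
      then have le_c: "1 / real (Suc m) * real (j\<^sup>2) \<le> c * real (j\<^sup>2)" for j
        by (intro mult_right_mono) auto
      show ?thesis
        using elim[rule_format, of m] by (rule eventually_mono) (erule order_trans, rule le_c)
    qed
    have step: "\<bar>(\<Sum>i<Suc n. D i \<omega>) - (\<Sum>i<n. D i \<omega>)\<bar> \<le> 1" for n
      using bounded by simp
    show ?case
      by (intro allI impI sublinear_of_sublinear_on_squares[of "\<lambda>N. \<Sum>i<N. D i \<omega>", OF step squares])
  qed
qed

end

section \<open>The natural filtration\<close>

lemma sets_past_sigma:
  "sets (past_sigma M X n) = sigma_sets (space M) (\<Union>i<n. {X i -` B \<inter> space M | B. B \<in> sets borel})"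
  unfolding past_sigma_def by (rule sets_measure_of) auto

lemma space_past_sigma [simp]: "space (past_sigma M X n) = space M"
  unfolding past_sigma_def by (rule space_measure_of) auto

lemma subalgebra_past_sigma:
  assumes "\<And>i. X i \<in> borel_measurable M"
  shows "subalgebra M (past_sigma M X n)"
  unfolding subalgebra_def sets_past_sigma
  using assms by (auto intro!: sets.sigma_sets_subset)

lemma subalgebra_past_sigma_mono:
  assumes "n \<le> m"
  shows "subalgebra (past_sigma M X m) (past_sigma M X n)"
  unfolding subalgebra_def sets_past_sigma
  using assms by (intro conjI refl sigma_sets_mono' UN_mono) auto

lemma measurable_past_sigma:
  fixes X :: "nat \<Rightarrow> 'b \<Rightarrow> 'a::topological_space"
  assumes "i < n"
  shows "X i \<in> borel_measurable (past_sigma M X n)"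
proof (rule measurableI)
  fix B :: "'a set"
  assume "B \<in> sets borel"
  then show "X i -` B \<inter> space (past_sigma M X n) \<in> sets (past_sigma M X n)"
    unfolding sets_past_sigma space_past_sigma using assms by (blast intro: sigma_sets.Basic)
qed simp

lemma sigma_finite_subalgebra_past_sigma:
  assumes "prob_space M" and "\<And>i. X i \<in> borel_measurable M"
  shows "sigma_finite_subalgebra M (past_sigma M X n)"
proof -
  interpret prob_space M by fact
  have "finite_measure_subalgebra M (past_sigma M X n)"
    by unfold_locales (rule subalgebra_past_sigma[OF assms(2)])
  then show ?thesis
    by (rule finite_measure_subalgebra_is_sigma_finite)
qed

lemma AE_cond_prob_past_le_1:
  assumes "prob_space M" and [measurable]: "\<And>i. X i \<in> borel_measurable M" "A \<in> sets borel"
  shows "AE \<omega> in M. cond_prob_past M X n A \<omega> \<le> 1"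
proof -
  interpret sigma_finite_subalgebra M "past_sigma M X n"
    using assms(1,2) by (rule sigma_finite_subalgebra_past_sigma)
  have "AE \<omega> in M. cond_prob_past M X n A \<omega> \<le> nn_cond_exp M (past_sigma M X n) (\<lambda>_. 1) \<omega>"
    unfolding cond_prob_past_def by (intro nn_cond_exp_mono) (auto split: split_indicator)
  moreover have "AE \<omega> in M. 1 = nn_cond_exp M (past_sigma M X n) (\<lambda>_. 1) \<omega>"
    by (intro nn_cond_exp_F_meas) simp
  ultimately show ?thesis
    by eventually_elim simp
qed

lemma (in sigma_finite_subalgebra) real_cond_exp_nonneg:
  assumes "\<And>x. 0 \<le> f x"
  shows "AE x in M. real_cond_exp M F f x = enn2real (nn_cond_exp M F (\<lambda>x. ennreal (f x)) x)"
proof -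
  have "AE x in M. 0 = nn_cond_exp M F (\<lambda>_. 0) x"
    by (intro nn_cond_exp_F_meas) simp
  then show ?thesis
    unfolding real_cond_exp_def using assms by (auto simp: ennreal_neg)
qed

lemma (in sigma_finite_subalgebra) integral_mult_diff_real_cond_exp:
  fixes Z Y p :: "'a \<Rightarrow> real"
  assumes [measurable]: "Z \<in> borel_measurable F" "Y \<in> borel_measurable M" "p \<in> borel_measurable M"
    and "integrable M (\<lambda>x. Z x * Y x)" "integrable M (\<lambda>x. Z x * p x)"
    and "AE x in M. real_cond_exp M F Y x = p x"
  shows "(\<integral>x. Z x * (Y x - p x) \<partial>M) = 0"
proof -
  have [measurable]: "Z \<in> borel_measurable M"
    by (rule measurable_from_subalg[OF subalg assms(1)])
  have "(\<integral>x. Z x * p x \<partial>M) = (\<integral>x. Z x * real_cond_exp M F Y x \<partial>M)"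
    using assms(6) by (intro integral_cong_AE) auto
  also have "\<dots> = (\<integral>x. Z x * Y x \<partial>M)"
    using assms(4,1,2) by (rule real_cond_exp_intg(2))
  finally show ?thesis
    using assms(4,5) by (simp add: right_diff_distrib)
qed

text \<open>The truncation by 1 is almost surely void (\<open>AE_cond_prob_past_le_1\<close>); it makes the
  increments bounded everywhere.\<close>

definition cond_prob_increment ::
    "'b measure \<Rightarrow> (nat \<Rightarrow> 'b \<Rightarrow> 'a::topological_space) \<Rightarrow> 'a set \<Rightarrow> nat \<Rightarrow> 'b \<Rightarrow> real"
  where "cond_prob_increment M X A n \<omega> =
    indicator A (X n \<omega>) - min 1 (enn2real (cond_prob_past M X n A \<omega>))"

lemma abs_cond_prob_increment_le_1: "\<bar>cond_prob_increment M X A n \<omega>\<bar> \<le> 1"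
  unfolding cond_prob_increment_def by (auto simp: indicator_def)

lemma measurable_cond_prob_increment:
  fixes X :: "nat \<Rightarrow> 'b \<Rightarrow> 'a::topological_space"
  assumes "A \<in> sets borel" and "n < m"
  shows "cond_prob_increment M X A n \<in> borel_measurable (past_sigma M X m)"
proof -
  have "cond_prob_past M X n A \<in> borel_measurable (past_sigma M X m)"
    using subalgebra_past_sigma_mono[of n m] \<open>n < m\<close> unfolding cond_prob_past_def
    by (intro measurable_from_subalg[OF _ borel_measurable_nn_cond_exp]) auto
  moreover have "X n \<in> borel_measurable (past_sigma M X m)"
    using \<open>n < m\<close> by (rule measurable_past_sigma)
  ultimately show ?thesis
    unfolding cond_prob_increment_def[abs_def] using assms(1) by measurable
qed

lemma integral_mult_cond_prob_increment:
  fixes X :: "nat \<Rightarrow> 'b \<Rightarrow> 'a::topological_space"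
  assumes "prob_space M" and [measurable]: "\<And>i. X i \<in> borel_measurable M" "A \<in> sets borel"
    and Z: "Z \<in> borel_measurable (past_sigma M X n)" "\<And>\<omega>. \<bar>Z \<omega>\<bar> \<le> B"
  shows "(\<integral>\<omega>. Z \<omega> * cond_prob_increment M X A n \<omega> \<partial>M) = 0"
proof -
  interpret prob_space M by fact
  interpret F: sigma_finite_subalgebra M "past_sigma M X n"
    using assms(1,2) by (rule sigma_finite_subalgebra_past_sigma)
  define p where "p \<omega> = min 1 (enn2real (cond_prob_past M X n A \<omega>))" for \<omega>
  have [measurable]: "Z \<in> borel_measurable M"
    by (rule measurable_from_subalg[OF F.subalg Z(1)])
  have p_M [measurable]: "p \<in> borel_measurable M"
    unfolding p_def cond_prob_past_def by measurable
  have "AE \<omega> in M. real_cond_exp M (past_sigma M X n) (\<lambda>\<omega>. indicator A (X n \<omega>)) \<omega>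
      = enn2real (cond_prob_past M X n A \<omega>)"
    using F.real_cond_exp_nonneg[of "\<lambda>\<omega>. indicator A (X n \<omega>)"]
    by (simp add: cond_prob_past_def ennreal_indicator)
  moreover have "AE \<omega> in M. cond_prob_past M X n A \<omega> \<le> 1"
    using assms(1-3) by (rule AE_cond_prob_past_le_1)
  ultimately have cond_exp:
    "AE \<omega> in M. real_cond_exp M (past_sigma M X n) (\<lambda>\<omega>. indicator A (X n \<omega>)) \<omega> = p \<omega>"
    unfolding p_def by eventually_elim (simp add: enn2real_leI)
  have Z_mult: "\<bar>Z \<omega> * y\<bar> \<le> B" if "\<bar>y\<bar> \<le> 1" for \<omega> y
    using mult_mono[OF Z(2) that order_trans[OF abs_ge_zero Z(2)] abs_ge_zero] by (simp add: abs_mult)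
  have "integrable M (\<lambda>\<omega>. Z \<omega> * indicator A (X n \<omega>))"
    by (intro integrable_bounded_real[where B=B] Z_mult) (auto simp: indicator_def)
  moreover have "integrable M (\<lambda>\<omega>. Z \<omega> * p \<omega>)"
    by (rule integrable_bounded_real[where B=B]) (measurable, auto intro: Z_mult simp: p_def)
  ultimately have "(\<integral>\<omega>. Z \<omega> * (indicator A (X n \<omega>) - p \<omega>) \<partial>M) = 0"
    by (intro F.integral_mult_diff_real_cond_exp[OF Z(1) _ p_M _ _ cond_exp]) simp_all
  then show ?thesis
    by (simp add: p_def cond_prob_increment_def)
qed

lemma AE_frequency_le_of_cond_prob_less:
  fixes X :: "nat \<Rightarrow> 'b \<Rightarrow> 'a::topological_space"
  assumes "prob_space M" and [measurable]: "\<And>i. X i \<in> borel_measurable M" "A \<in> sets borel"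
    and less: "AE \<omega> in M. \<forall>n. cond_prob_past M X n A \<omega> < ennreal c"
  shows "AE \<omega> in M. \<forall>\<eta>>0. \<forall>\<^sub>F N in sequentially. (\<Sum>i<N. indicator A (X i \<omega>)) \<le> (c + \<eta>) * real N"
proof -
  interpret prob_space M by fact
  define D where "D = cond_prob_increment M X A"
  have D_past: "D i \<in> borel_measurable (past_sigma M X n)" if "i < n" for i n
    unfolding D_def using assms(3) that by (rule measurable_cond_prob_increment)
  have D_bounded: "\<bar>D n \<omega>\<bar> \<le> 1" for n \<omega>
    unfolding D_def by (rule abs_cond_prob_increment_le_1)
  have [measurable]: "D n \<in> borel_measurable M" for n
    using measurable_from_subalg[OF subalgebra_past_sigma D_past[of n "Suc n"]] by simp
  have "(\<integral>\<omega>. (\<Sum>i<n. D i \<omega>) * D n \<omega> \<partial>M) = 0" for n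
    unfolding D_def using assms(1-3)
  proof (rule integral_mult_cond_prob_increment)
    show "(\<lambda>\<omega>. \<Sum>i<n. cond_prob_increment M X A i \<omega>) \<in> borel_measurable (past_sigma M X n)"
      using D_past unfolding D_def by (intro borel_measurable_sum) auto
    show "\<bar>\<Sum>i<n. cond_prob_increment M X A i \<omega>\<bar> \<le> real n" for \<omega>
      by (intro abs_sum_le_of_abs_le_1 abs_cond_prob_increment_le_1)
  qed
  then have "AE \<omega> in M. \<forall>\<eta>>0. \<forall>\<^sub>F N in sequentially. \<bar>\<Sum>i<N. D i \<omega>\<bar> \<le> \<eta> * real N"
    using D_bounded by (intro strong_law_bounded_orthogonal) auto
  with less show ?thesis
  proof eventually_elim
    case (elim \<omega>)
    have "indicator A (X i \<omega>) \<le> D i \<omega> + c" for i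
      using elim(1)[rule_format, of i] unfolding D_def cond_prob_increment_def
      by (cases "cond_prob_past M X i A \<omega>") (auto simp: ennreal_less_iff)
    then have sum_le: "(\<Sum>i<N. indicator A (X i \<omega>)) \<le> (\<Sum>i<N. D i \<omega>) + c * real N" for N
      using sum_mono[of "{..<N}" "\<lambda>i. indicator A (X i \<omega>)" "\<lambda>i. D i \<omega> + c"] by (simp add: sum.distrib mult.commute)
    show ?case
    proof (intro allI impI)
      fix \<eta> :: real
      assume "\<eta> > 0"
      with elim(2) have "\<forall>\<^sub>F N in sequentially. \<bar>\<Sum>i<N. D i \<omega>\<bar> \<le> \<eta> * real N"
        by blast
      then show "\<forall>\<^sub>F N in sequentially. (\<Sum>i<N. indicator A (X i \<omega>)) \<le> (c + \<eta>) * real N"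
      proof (rule eventually_mono)
        fix N
        assume "\<bar>\<Sum>i<N. D i \<omega>\<bar> \<le> \<eta> * real N"
        then show "(\<Sum>i<N. indicator A (X i \<omega>)) \<le> (c + \<eta>) * real N"
          using sum_le[of N] unfolding distrib_right by linarith
      qed
    qed
  qed
qed

section \<open>Nearest neighbours stay in a bounded region\<close>

lemma eventually_nn_process_in_ball:
  assumes "nn_process X Xt"
  shows "\<forall>\<^sub>F n in sequentially. X n \<omega> \<notin> ball x (3 * r) \<or> Xt n \<omega> \<notin> ball x (3 * r) \<longrightarrow> X n \<omega> \<notin> ball x r"
proof (cases "\<exists>i. X i \<omega> \<in> ball x r")
  case True
  then obtain i where i: "X i \<omega> \<in> ball x r" ..
  have Xt_in_ball: "Xt n \<omega> \<in> ball x (3 * r)" if "n > i" "X n \<omega> \<in> ball x r" for n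
  proof -
    have "dist (X n \<omega>) (Xt n \<omega>) \<le> dist (X n \<omega>) (X i \<omega>)"
      using assms \<open>n > i\<close> unfolding nn_process_def by auto
    moreover have "dist (X n \<omega>) (X i \<omega>) \<le> dist x (X n \<omega>) + dist x (X i \<omega>)"
      by (rule dist_triangle3)
    moreover have "dist x (Xt n \<omega>) \<le> dist x (X n \<omega>) + dist (X n \<omega>) (Xt n \<omega>)"
      by (rule dist_triangle)
    ultimately show ?thesis
      using i \<open>X n \<omega> \<in> ball x r\<close> unfolding mem_ball by linarith
  qed
  have "0 < r"
    using i by (metis mem_ball zero_le_dist le_less_trans)
  then have "ball x r \<subseteq> ball x (3 * r)"
    by (intro subset_ball) simp
  with Xt_in_ball have "X n \<omega> \<notin> ball x r" if "n > i" "X n \<omega> \<notin> ball x (3 * r) \<or> Xt n \<omega> \<notin> ball x (3 * r)" for n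
    using that by blast
  then show ?thesis
    unfolding eventually_sequentially by (intro exI[of _ "Suc i"]) (simp add: Suc_le_eq)
next
  case False
  then show ?thesis
    by simp
qed

lemma measure_compl_ball_less:
  fixes M :: "'a::metric_space measure"
  assumes "finite_measure M" and "sets M = sets borel" and "\<delta> > 0"
  obtains r where "measure M (- ball x r) < \<delta>"
proof -
  interpret finite_measure M by fact
  have "range (\<lambda>k. - ball x (real k)) \<subseteq> sets M"
    unfolding assms(2) by (auto intro: borel_comp)
  moreover have "decseq (\<lambda>k. - ball x (real k))"
    by (auto simp: decseq_def)
  moreover have "(\<Inter>k. - ball x (real k)) = {}"
  proof -
    have "y \<notin> (\<Inter>k. - ball x (real k))" for y
      using reals_Archimedean2[of "dist x y"] by auto
    then show ?thesis
      by blast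
  qed
  ultimately have "(\<lambda>k. measure M (- ball x (real k))) \<longlonglongrightarrow> 0"
    using finite_Lim_measure_decseq[of "\<lambda>k. - ball x (real k)"] by simp
  then have "\<forall>\<^sub>F k in sequentially. measure M (- ball x (real k)) < \<delta>"
    using \<open>\<delta> > 0\<close> by (rule order_tendstoD)
  then show ?thesis
    using that by (meson eventually_sequentially order_refl)
qed

lemma AE_cond_prob_past_compl_ball_less:
  fixes \<nu> :: "'a::metric_space measure"
  assumes "unif_dominated_rate M X \<nu> epsr" and "finite_measure \<nu>" and "sets \<nu> = sets borel"
    and "c > 0"
  obtains r where "AE \<omega> in M. \<forall>n. cond_prob_past M X n (- ball x r) \<omega> < ennreal c"
proof -
  obtain \<delta> where "\<delta> > 0" and dominated: "\<And>A. A \<in> sets \<nu> \<Longrightarrow> measure \<nu> A < \<delta> \<Longrightarrow>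
      AE \<omega> in M. (SUP n. cond_prob_past M X n A \<omega>) < ennreal c"
    using assms(1,4) unfolding unif_dominated_rate_def by blast
  obtain r where "measure \<nu> (- ball x r) < \<delta>"
    using measure_compl_ball_less[OF assms(2,3) \<open>\<delta> > 0\<close>] .
  then have "AE \<omega> in M. (SUP n. cond_prob_past M X n (- ball x r) \<omega>) < ennreal c"
    using assms(3) by (intro dominated) auto
  then have "AE \<omega> in M. \<forall>n. cond_prob_past M X n (- ball x r) \<omega> < ennreal c"
    by eventually_elim (metis SUP_upper UNIV_I le_less_trans)
  then show ?thesis
    by (rule that)
qed

theorem lemma7:
  fixes M :: "'b measure" and \<nu> :: "'a::metric_space measure"
    and X :: "nat \<Rightarrow> 'b \<Rightarrow> 'a" and epsr :: "real \<Rightarrow> real" and e :: real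
  assumes "prob_space M"
    and "sets \<nu> = sets borel" and "finite_measure \<nu>"
    and "\<And>n. X n \<in> borel_measurable M"
    and "unif_dominated_rate M X \<nu> epsr"
    and "e > 0"
  shows "\<exists>X'. bounded X' \<and>
    (\<forall>Xt. (\<forall>n. Xt n \<in> borel_measurable M) \<and> nn_process X Xt \<longrightarrow>
      (AE \<omega> in M. limsup (\<lambda>N. ereal ((1 / real N) *
          (\<Sum>n=1..N. of_bool (X n \<omega> \<notin> X' \<or> Xt n \<omega> \<notin> X')))) < ereal e))"
proof -
  fix x :: 'a
  define c where "c = e / 4"
  have "c > 0"
    using \<open>e > 0\<close> by (simp add: c_def)
  then obtain r where "AE \<omega> in M. \<forall>n. cond_prob_past M X n (- ball x r) \<omega> < ennreal c"
    using AE_cond_prob_past_compl_ball_less[OF assms(5,3,2)] by blast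
  then have "AE \<omega> in M. \<forall>\<eta>>0. \<forall>\<^sub>F N in sequentially.
      (\<Sum>n<N. indicator (- ball x r) (X n \<omega>)) \<le> (c + \<eta>) * real N"
    by (intro AE_frequency_le_of_cond_prob_less[OF assms(1,4)]) auto
  then have frequency: "AE \<omega> in M. \<forall>\<eta>>0. \<forall>\<^sub>F N in sequentially.
      (\<Sum>n<N. of_bool (X n \<omega> \<notin> ball x r)) \<le> (c + \<eta>) * real N"
    by (simp add: indicator_def)
  show ?thesis
  proof (intro exI[of _ "ball x (3 * r)"] conjI allI impI)
    fix Xt
    assume "(\<forall>n. Xt n \<in> borel_measurable M) \<and> nn_process X Xt"
    then have nn: "nn_process X Xt"
      by blast
    have "c + c < e"
      using \<open>e > 0\<close> by (simp add: c_def)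
    show "AE \<omega> in M. limsup (\<lambda>N. ereal (1 / real N *
        (\<Sum>n=1..N. of_bool (X n \<omega> \<notin> ball x (3 * r) \<or> Xt n \<omega> \<notin> ball x (3 * r))))) < ereal e"
      using frequency
    proof eventually_elim
      case (elim \<omega>)
      then have "\<forall>\<^sub>F N in sequentially. (\<Sum>n<N. of_bool (X n \<omega> \<notin> ball x r)) \<le> (c + c) * real N"
        using \<open>c > 0\<close> by blast
      with \<open>c + c < e\<close> show ?case
        by (intro limsup_frequency_less[OF eventually_nn_process_in_ball[OF nn]])
    qed
  qed simp
qed

end
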